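(* Let $U\subset\mathbb{C}$ be simply connected and let $F,G$ be holomorphic and nowhere zero on $U$. Then $\mathbf{x}(z)=\mathrm{Re}\int_{z_0}^z(F,-\mathrm{i}F,-F/G)\,\mathrm{d}w$ is an admissible, conformal ($g_{ij}=|F|^2\delta_{ij}$), simply isotropic minimal immersion. Its parabolic normal is $$\xi=\Big(\mathrm{Re}\frac{G}{|G|^2},\ \mathrm{Im}\frac{G}{|G|^2},\ \frac12-\frac{1}{2|G|^2}\Big)\in\Sigma^2,$$ and $\pi(\xi)=G$.
   Context: $\mathbb{I}^3$ is $\mathbb{R}^3$ with the degenerate metric $\langle a,b\rangle=a^1b^1+a^2b^2$. A surface is admissible if none of its tangent planes contains $(0,0,1)$, and minimal if its isotropic mean curvature vanishes. The minimal normal $\mathbf{N}_m$ is the unique vector of the form $(a,b,1)$ Euclidean-orthogonal to the tangent plane. Writing $\tilde{\mathbf{N}}_m=(a,b,0)$ for its top view, the parabolic normal is $\xi=\tilde{\mathbf{N}}_m+\frac12(1-a^2-b^2)(0,0,1)$. It takes values in $\Sigma^2=\{z=\frac12-\frac12(x^2+y^2)\}$. The parabolic stereographic projection is $\pi(p_1,p_2,p_3)=\frac{1}{p_1^2+p_2^2}(p_1,p_2)\equiv\frac{p_1+\mathrm{i}p_2}{p_1^2+p_2^2}\in\mathbb{C}$, defined on $\Sigma^2\setminus\{(0,0,\frac12)\}$. *)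

theory Defs
  imports "HOL-Complex_Analysis.Complex_Analysis"
begin

text \<open>Surfaces in the simply isotropic space I^3 = R^3 with degenerate metric
  a1 b1 + a2 b2, parametrized by z = u + i v in an open subset of the complex plane.\<close>

definition iso_inner :: "real^3 \<Rightarrow> real^3 \<Rightarrow> real" where
  "iso_inner a b = a$1 * b$1 + a$2 * b$2"

definition e3 :: "real^3" where
  "e3 = vector [0, 0, 1]"

definition du :: "(complex \<Rightarrow> real^3) \<Rightarrow> complex \<Rightarrow> real^3" where
  "du x z = vector_derivative (\<lambda>t::real. x (z + of_real t)) (at 0)"

definition dv :: "(complex \<Rightarrow> real^3) \<Rightarrow> complex \<Rightarrow> real^3" where
  "dv x z = vector_derivative (\<lambda>t::real. x (z + \<i> * of_real t)) (at 0)"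

definition immersion :: "complex set \<Rightarrow> (complex \<Rightarrow> real^3) \<Rightarrow> bool" where
  "immersion U x \<longleftrightarrow> (\<forall>z\<in>U. x differentiable (at z) \<and> du x differentiable (at z) \<and>
      dv x differentiable (at z) \<and>
      (\<forall>a b::real. a *\<^sub>R du x z + b *\<^sub>R dv x z = 0 \<longrightarrow> a = 0 \<and> b = 0))"

definition admissible :: "complex set \<Rightarrow> (complex \<Rightarrow> real^3) \<Rightarrow> bool" where
  "admissible U x \<longleftrightarrow> (\<forall>z\<in>U. e3 \<notin> span {du x z, dv x z})"

definition minimal_normal :: "(complex \<Rightarrow> real^3) \<Rightarrow> complex \<Rightarrow> real^3" where
  "minimal_normal x z = (THE n. n$3 = 1 \<and> n \<bullet> du x z = 0 \<and> n \<bullet> dv x z = 0)"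

definition iso_mean_curvature :: "(complex \<Rightarrow> real^3) \<Rightarrow> complex \<Rightarrow> real" where
  "iso_mean_curvature x z =
    (let E = iso_inner (du x z) (du x z); F = iso_inner (du x z) (dv x z);
         G = iso_inner (dv x z) (dv x z); Nm = minimal_normal x z;
         L = du (du x) z \<bullet> Nm; M = dv (du x) z \<bullet> Nm; N = dv (dv x) z \<bullet> Nm
     in (E * N - 2 * F * M + G * L) / (2 * (E * G - F\<^sup>2)))"

definition iso_minimal :: "complex set \<Rightarrow> (complex \<Rightarrow> real^3) \<Rightarrow> bool" where
  "iso_minimal U x \<longleftrightarrow> (\<forall>z\<in>U. iso_mean_curvature x z = 0)"

definition parabolic_normal :: "(complex \<Rightarrow> real^3) \<Rightarrow> complex \<Rightarrow> real^3" where
  "parabolic_normal x z =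
    (let n = minimal_normal x z in vector [n$1, n$2, (1 - (n$1)\<^sup>2 - (n$2)\<^sup>2) / 2])"

definition Sigma2 :: "(real^3) set" where
  "Sigma2 = {p. p$3 = 1/2 - ((p$1)\<^sup>2 + (p$2)\<^sup>2) / 2}"

text \<open>Parabolic stereographic projection, defined on Sigma2 minus (0,0,1/2).\<close>
definition par_stereo :: "real^3 \<Rightarrow> complex" where
  "par_stereo p = Complex (p$1) (p$2) / complex_of_real ((p$1)\<^sup>2 + (p$2)\<^sup>2)"

text \<open>The integral from z0 to z of f along any valid path in U
  (path-independent for holomorphic f on simply connected U).\<close>
definition path_int :: "complex set \<Rightarrow> complex \<Rightarrow> (complex \<Rightarrow> complex) \<Rightarrow> complex \<Rightarrow> complex" where
  "path_int U z0 f z = (THE I. \<forall>\<gamma>. valid_path \<gamma> \<and> path_image \<gamma> \<subseteq> U \<and>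
      pathstart \<gamma> = z0 \<and> pathfinish \<gamma> = z \<longrightarrow> (f has_contour_integral I) \<gamma>)"

end

theory Submission
  imports Defs
begin

(* Each coordinate of x is the real part of a primitive of f = (F, -iF, -F/G), so x_u = Re f and
   x_v = Re (i f). The horizontal components of x_u, x_v are (Re F, Im F) and (-Im F, Re F): they
   give the conformal isotropic metric |F|^2 and keep e3 out of the tangent plane. Real parts of
   holomorphic functions are harmonic, so x_uu + x_vv = 0, which together with conformality makes
   the isotropic mean curvature vanish. Orthogonality of (a, b, 1) to x_u and x_v says
   conj (a + ib) F = F/G, hence a + ib = 1 / conj G = G/|G|^2, and the parabolic stereographic
   projection w |-> w/|w|^2 = 1 / conj w sends this back to G. *)

lemma vector_derivative_along_line:
  fixes y :: "complex \<Rightarrow> 'a::real_normed_vector"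
  assumes "(y has_derivative D) (at z)"
  shows "((\<lambda>t::real. y (z + k * of_real t)) has_vector_derivative D k) (at 0)"
proof -
  have "((\<lambda>t::real. z + k * of_real t) has_derivative (\<lambda>t. t *\<^sub>R k)) (at 0)"
    by (auto intro!: derivative_eq_intros simp: scaleR_conv_of_real mult.commute)
  from has_derivative_compose[OF this, of y D] assms
  have "((\<lambda>t::real. y (z + k * of_real t)) has_derivative (\<lambda>t. D (t *\<^sub>R k))) (at 0)"
    by simp
  moreover have "linear D"
    using assms has_derivative_linear by blast
  ultimately show ?thesis
    by (simp add: has_vector_derivative_def linear_scale)
qed

lemma du_dv_eq_derivative:
  assumes "(y has_derivative D) (at z)"
  shows "du y z = D 1" and "dv y z = D \<i>"
  using vector_derivative_along_line[OF assms, THEN vector_derivative_at, of 1]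
    vector_derivative_along_line[OF assms, THEN vector_derivative_at, of \<i>]
  by (simp_all add: du_def dv_def)

lemma Re3_has_derivative:
  assumes "(h1 has_field_derivative d1) (at z)" "(h2 has_field_derivative d2) (at z)"
    and "(h3 has_field_derivative d3) (at z)"
  shows "((\<lambda>w. vector [Re (h1 w), Re (h2 w), Re (h3 w)] :: real^3) has_derivative
           (\<lambda>v. vector [Re (d1 * v), Re (d2 * v), Re (d3 * v)])) (at z)"
proof -
  have Re: "((\<lambda>w. Re (h w)) has_derivative (\<lambda>v. Re (d * v))) (at z)"
    if "(h has_field_derivative d) (at z)" for h d
    using bounded_linear.has_derivative[OF bounded_linear_Re that[unfolded has_field_derivative_def]]
    by (simp add: mult.commute)
  have vec: "(vector [a, b, c] :: real^3) = a *\<^sub>R axis 1 1 + b *\<^sub>R axis 2 1 + c *\<^sub>R axis 3 1"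
    for a b c by (simp add: vec_eq_iff forall_3 axis_def)
  show ?thesis
    unfolding vec by (intro has_derivative_add has_derivative_scaleR_left Re assms)
qed

lemma du_dv_Re3:
  assumes "open U" "z \<in> U" and y: "\<forall>w\<in>U. y w = vector [Re (h1 w), Re (h2 w), Re (h3 w)]"
    and "(h1 has_field_derivative d1) (at z)" "(h2 has_field_derivative d2) (at z)"
    and "(h3 has_field_derivative d3) (at z)"
  shows "y differentiable (at z)"
    and "du y z = vector [Re d1, Re d2, Re d3]"
    and "dv y z = vector [Re (\<i> * d1), Re (\<i> * d2), Re (\<i> * d3)]"
proof -
  have "(y has_derivative (\<lambda>v. vector [Re (d1 * v), Re (d2 * v), Re (d3 * v)])) (at z)"
    using has_derivative_transform_within_open[OF Re3_has_derivative[OF assms(4-6)] assms(1,2)] y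
    by simp
  then show "y differentiable (at z)" "du y z = vector [Re d1, Re d2, Re d3]"
    "dv y z = vector [Re (\<i> * d1), Re (\<i> * d2), Re (\<i> * d3)]"
    by (auto simp: differentiable_def du_dv_eq_derivative mult.commute)
qed

lemma Re3_harmonic:
  assumes "open U" "z \<in> U" and y: "\<forall>w\<in>U. y w = vector [Re (h1 w), Re (h2 w), Re (h3 w)]"
    and hol: "h1 holomorphic_on U" "h2 holomorphic_on U" "h3 holomorphic_on U"
  shows "du y differentiable (at z)" "dv y differentiable (at z)"
    and "du (du y) z + dv (dv y) z = 0"
proof -
  have D: "(h has_field_derivative deriv h w) (at w)" if "h holomorphic_on U" "w \<in> U" for h w
    using holomorphic_derivI[OF that(1) \<open>open U\<close> that(2)] .
  have D2: "(deriv h has_field_derivative deriv (deriv h) z) (at z)" if "h holomorphic_on U" for h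
    using D[OF holomorphic_deriv[OF that \<open>open U\<close>] \<open>z \<in> U\<close>] .
  have "\<forall>w\<in>U. du y w = vector [Re (deriv h1 w), Re (deriv h2 w), Re (deriv h3 w)]"
    and "\<forall>w\<in>U. dv y w = vector [Re (\<i> * deriv h1 w), Re (\<i> * deriv h2 w), Re (\<i> * deriv h3 w)]"
    using du_dv_Re3[OF \<open>open U\<close> _ y D[OF hol(1)] D[OF hol(2)] D[OF hol(3)]] by auto
  note du = du_dv_Re3[OF \<open>open U\<close> \<open>z \<in> U\<close> this(1) D2[OF hol(1)] D2[OF hol(2)] D2[OF hol(3)]]
    and dv = du_dv_Re3[OF \<open>open U\<close> \<open>z \<in> U\<close> this(2) DERIV_cmult[OF D2[OF hol(1)]]
        DERIV_cmult[OF D2[OF hol(2)]] DERIV_cmult[OF D2[OF hol(3)]]]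
  show "du y differentiable (at z)" "dv y differentiable (at z)"
    using du(1) dv(1) .
  show "du (du y) z + dv (dv y) z = 0"
    unfolding du(2) dv(3) by (simp add: vec_eq_iff forall_3)
qed

lemma path_int_eq_primitive_diff:
  assumes "open U" "connected U" "z0 \<in> U" "z \<in> U"
    and P: "\<And>w. w \<in> U \<Longrightarrow> (P has_field_derivative f w) (at w)"
  shows "path_int U z0 f z = P z - P z0"
  unfolding path_int_def
proof (rule the_equality)
  have integral: "(f has_contour_integral P z - P z0) \<gamma>"
    if "valid_path \<gamma>" "path_image \<gamma> \<subseteq> U" "pathstart \<gamma> = z0" "pathfinish \<gamma> = z" for \<gamma>
    using contour_integral_primitive[of U P f \<gamma>] P that by (metis has_field_derivative_at_within)
  then show "\<forall>\<gamma>. valid_path \<gamma> \<and> path_image \<gamma> \<subseteq> U \<and> pathstart \<gamma> = z0 \<and> pathfinish \<gamma> = z \<longrightarrow>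
      (f has_contour_integral P z - P z0) \<gamma>"
    by blast
  fix I
  assume I: "\<forall>\<gamma>. valid_path \<gamma> \<and> path_image \<gamma> \<subseteq> U \<and> pathstart \<gamma> = z0 \<and> pathfinish \<gamma> = z \<longrightarrow>
      (f has_contour_integral I) \<gamma>"
  obtain g where g: "polynomial_function g" "path_image g \<subseteq> U" "pathstart g = z0" "pathfinish g = z"
    using connected_open_polynomial_connected[OF assms(1-4)] by blast
  then have "valid_path g"
    using valid_path_polynomial_function by blast
  with g I integral show "I = P z - P z0"
    using has_contour_integral_unique by blast
qed

lemma path_int_has_field_derivative:
  assumes "open U" "simply_connected U" "z0 \<in> U" "f holomorphic_on U" "z \<in> U"
  shows "(path_int U z0 f has_field_derivative f z) (at z)"
proof -
  obtain P where P: "\<And>w. w \<in> U \<Longrightarrow> (P has_field_derivative f w) (at w)"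
    using assms(1,2,4) simply_connected_eq_global_primitive by metis
  have "connected U"
    using assms(1,2) simply_connected_eq_global_primitive by blast
  have "((\<lambda>w. P w - P z0) has_field_derivative f z) (at z)"
    using P[OF \<open>z \<in> U\<close>] by (auto intro!: derivative_eq_intros)
  then show ?thesis
    by (rule has_field_derivative_transform_within_open[OF _ \<open>open U\<close> \<open>z \<in> U\<close>])
       (use path_int_eq_primitive_diff[OF \<open>open U\<close> \<open>connected U\<close> \<open>z0 \<in> U\<close> _ P] in auto)
qed

lemma Re_path_int_derivatives:
  assumes "open U" "simply_connected U" "z0 \<in> U" "z \<in> U"
    and hol: "f1 holomorphic_on U" "f2 holomorphic_on U" "f3 holomorphic_on U"
    and y: "\<forall>w. y w = vector [Re (path_int U z0 f1 w), Re (path_int U z0 f2 w), Re (path_int U z0 f3 w)]"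
  shows "y differentiable (at z)" "du y differentiable (at z)" "dv y differentiable (at z)"
    and "du y z = vector [Re (f1 z), Re (f2 z), Re (f3 z)]"
    and "dv y z = vector [Re (\<i> * f1 z), Re (\<i> * f2 z), Re (\<i> * f3 z)]"
    and "du (du y) z + dv (dv y) z = 0"
proof -
  note D = path_int_has_field_derivative[OF assms(1-3)]
  have int_hol: "path_int U z0 f holomorphic_on U" if "f holomorphic_on U" for f
    using D[OF that] \<open>open U\<close> by (auto simp: holomorphic_on_open)
  from y have y': "\<forall>w\<in>U. y w = vector [Re (path_int U z0 f1 w), Re (path_int U z0 f2 w),
      Re (path_int U z0 f3 w)]"
    by blast
  show "y differentiable (at z)" "du y z = vector [Re (f1 z), Re (f2 z), Re (f3 z)]"
    "dv y z = vector [Re (\<i> * f1 z), Re (\<i> * f2 z), Re (\<i> * f3 z)]"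
    using du_dv_Re3[OF assms(1,4) y' D[OF hol(1) \<open>z \<in> U\<close>] D[OF hol(2) \<open>z \<in> U\<close>] D[OF hol(3) \<open>z \<in> U\<close>]]
    by blast+
  show "du y differentiable (at z)" "dv y differentiable (at z)" "du (du y) z + dv (dv y) z = 0"
    using Re3_harmonic[OF assms(1,4) y' int_hol[OF hol(1)] int_hol[OF hol(2)] int_hol[OF hol(3)]]
    by blast+
qed

lemma tangent_orthogonal_iff:
  "n \<bullet> vector [Re F, Im F, - Re (F / G)] = 0 \<and> n \<bullet> (vector [- Im F, Re F, Im (F / G)] :: real^3) = 0
   \<longleftrightarrow> cnj (Complex (n$1) (n$2)) * F = n$3 *\<^sub>R (F / G)"
  by (simp add: inner_vec_def sum_3 complex_eq_iff) argo

lemma minimal_normal_eq: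
  assumes "du x z = vector [Re F, Im F, - Re (F / G)]" "dv x z = vector [- Im F, Re F, Im (F / G)]"
    and "F \<noteq> 0"
  shows "minimal_normal x z = vector [Re (inverse (cnj G)), Im (inverse (cnj G)), 1]"
  unfolding minimal_normal_def
proof (rule the_equality)
  fix n :: "real^3"
  assume "n$3 = 1 \<and> n \<bullet> du x z = 0 \<and> n \<bullet> dv x z = 0"
  then have "n$3 = 1" "cnj (Complex (n$1) (n$2)) * F = 1 * (F / G)"
    using tangent_orthogonal_iff[of n F G] assms(1,2) by auto
  then have "cnj (Complex (n$1) (n$2)) = inverse G"
    using \<open>F \<noteq> 0\<close> by (simp add: divide_inverse)
  then have "Complex (n$1) (n$2) = inverse (cnj G)"
    by (metis complex_cnj_cnj complex_cnj_inverse)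
  with \<open>n$3 = 1\<close> show "n = vector [Re (inverse (cnj G)), Im (inverse (cnj G)), 1]"
    by (auto simp: vec_eq_iff forall_3 complex_eq_iff)
qed (use tangent_orthogonal_iff assms in \<open>auto simp: field_simps complex_cnj_divide\<close>)

lemma tangents_horizontally_independent:
  assumes "du x z = vector [Re F, Im F, c]" "dv x z = vector [- Im F, Re F, d]" "F \<noteq> 0"
    and "(a *\<^sub>R du x z + b *\<^sub>R dv x z)$1 = 0" "(a *\<^sub>R du x z + b *\<^sub>R dv x z)$2 = 0"
  shows "a = 0 \<and> b = 0"
proof -
  have "Complex a b * F = 0"
    using assms(4,5) by (simp add: assms(1,2) complex_eq_iff algebra_simps)
  with \<open>F \<noteq> 0\<close> have "Complex a b = 0"
    by simp
  then show ?thesis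
    by (simp add: complex_eq_iff)
qed

lemma e3_notin_span_if_horizontally_independent:
  assumes "\<And>a b. (a *\<^sub>R u + b *\<^sub>R v)$1 = 0 \<Longrightarrow> (a *\<^sub>R u + b *\<^sub>R v)$2 = 0 \<Longrightarrow> a = 0 \<and> b = 0"
  shows "e3 \<notin> span {u, v}"
proof
  assume "e3 \<in> span {u, v}"
  then obtain a b where "e3 - a *\<^sub>R u = b *\<^sub>R v"
    by (auto simp: span_insert span_singleton)
  then have ab: "e3 = a *\<^sub>R u + b *\<^sub>R v"
    by (simp add: algebra_simps)
  have "a = 0 \<and> b = 0"
    by (rule assms) (simp_all add: e3_def flip: ab)
  with ab show False
    by (simp add: e3_def vec_eq_iff forall_3)
qed

lemma iso_mean_curvature_eq_0_if_conformal_harmonic: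
  assumes "iso_inner (du x z) (du x z) = iso_inner (dv x z) (dv x z)"
    and "iso_inner (du x z) (dv x z) = 0" and "du (du x) z + dv (dv x) z = 0"
  shows "iso_mean_curvature x z = 0"
proof -
  have "dv (dv x) z \<bullet> minimal_normal x z = - (du (du x) z \<bullet> minimal_normal x z)"
    using assms(3) by (simp add: eq_neg_iff_add_eq_0 add.commute flip: inner_add_left)
  with assms(1,2) show ?thesis
    by (simp add: iso_mean_curvature_def Let_def)
qed

lemma inverse_cnj_eq: "inverse (cnj G) = G / of_real ((cmod G)\<^sup>2)"
  by (metis complex_cnj_cnj complex_div_cnj complex_mod_cnj div_by_1 inverse_eq_divide mult_1)

lemma par_stereo_vector: "par_stereo (vector [Re w, Im w, c]) = inverse (cnj w)"
  unfolding par_stereo_def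
  by (simp add: complex_div_cnj[of 1] inverse_eq_divide complex_eq_iff cmod_power2)

lemma parabolic_normal_in_Sigma2: "parabolic_normal x z \<in> Sigma2"
  by (simp add: parabolic_normal_def Sigma2_def Let_def field_simps)

lemma parabolic_normal_eq:
  assumes "minimal_normal x z = vector [Re w, Im w, 1]"
  shows "parabolic_normal x z = vector [Re w, Im w, (1 - (cmod w)\<^sup>2) / 2]"
  using assms by (simp add: parabolic_normal_def cmod_power2 algebra_simps)

lemma parabolic_normal_of_minimal_normal:
  assumes "minimal_normal x z = vector [Re (inverse (cnj G)), Im (inverse (cnj G)), 1]" "G \<noteq> 0"
  shows "parabolic_normal x z = vector [Re (G / of_real ((cmod G)\<^sup>2)), Im (G / of_real ((cmod G)\<^sup>2)),
           1/2 - 1 / (2 * (cmod G)\<^sup>2)]"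
    and "parabolic_normal x z \<in> Sigma2 - {vector [0, 0, 1/2]}"
    and "par_stereo (parabolic_normal x z) = G"
proof -
  have "(cmod (inverse (cnj G)))\<^sup>2 = 1 / (cmod G)\<^sup>2"
    by (simp add: inverse_eq_divide norm_divide power_divide)
  then have third: "(1 - (cmod (inverse (cnj G)))\<^sup>2) / 2 = 1/2 - 1 / (2 * (cmod G)\<^sup>2)"
    by (simp add: field_simps)
  show xi: "parabolic_normal x z = vector [Re (G / of_real ((cmod G)\<^sup>2)), Im (G / of_real ((cmod G)\<^sup>2)),
           1/2 - 1 / (2 * (cmod G)\<^sup>2)]"
    unfolding parabolic_normal_eq[OF assms(1)] third by (simp add: inverse_cnj_eq)
  have "parabolic_normal x z \<noteq> vector [0, 0, 1/2]"
  proof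
    assume "parabolic_normal x z = vector [0, 0, 1/2]"
    then have "Re (inverse (cnj G)) = 0" "Im (inverse (cnj G)) = 0"
      using parabolic_normal_eq[OF assms(1)] by (metis vector_3(1), metis vector_3(2))
    then have "inverse (cnj G) = 0"
      by (simp add: complex_eq_iff)
    with \<open>G \<noteq> 0\<close> show False
      by simp
  qed
  with parabolic_normal_in_Sigma2 show "parabolic_normal x z \<in> Sigma2 - {vector [0, 0, 1/2]}"
    by blast
  show "par_stereo (parabolic_normal x z) = G"
    unfolding parabolic_normal_eq[OF assms(1)] par_stereo_vector by simp
qed

theorem mainTheorem8:
  fixes U :: "complex set" and F G :: "complex \<Rightarrow> complex" and z0 :: complex
    and x :: "complex \<Rightarrow> real^3"
  assumes "open U" and "simply_connected U" and "z0 \<in> U"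
    and "F holomorphic_on U" and "G holomorphic_on U"
    and "\<forall>z\<in>U. F z \<noteq> 0" and "\<forall>z\<in>U. G z \<noteq> 0"
    and x_def: "\<forall>z. x z = vector [Re (path_int U z0 F z),
                                 Re (path_int U z0 (\<lambda>w. - \<i> * F w) z),
                                 Re (path_int U z0 (\<lambda>w. - F w / G w) z)]"
  shows "immersion U x \<and> admissible U x \<and> iso_minimal U x
     \<and> (\<forall>z\<in>U. iso_inner (du x z) (du x z) = (cmod (F z))\<^sup>2
              \<and> iso_inner (dv x z) (dv x z) = (cmod (F z))\<^sup>2
              \<and> iso_inner (du x z) (dv x z) = 0)
     \<and> (\<forall>z\<in>U. parabolic_normal x z =
              vector [Re (G z / of_real ((cmod (G z))\<^sup>2)), Im (G z / of_real ((cmod (G z))\<^sup>2)),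
                      1/2 - 1 / (2 * (cmod (G z))\<^sup>2)]
            \<and> parabolic_normal x z \<in> Sigma2 - {vector [0, 0, 1/2]}
            \<and> par_stereo (parabolic_normal x z) = G z)"
proof -
  have hol: "F holomorphic_on U" "(\<lambda>w. - \<i> * F w) holomorphic_on U" "(\<lambda>w. - F w / G w) holomorphic_on U"
    using assms(4,5,7) by (auto intro!: holomorphic_intros)
  note x = Re_path_int_derivatives[OF assms(1-3) _ hol x_def]
  have du: "du x z = vector [Re (F z), Im (F z), - Re (F z / G z)]"
    and dv: "dv x z = vector [- Im (F z), Re (F z), Im (F z / G z)]" if "z \<in> U" for z
    using x(4,5)[OF that] by (simp_all add: times_divide_eq_right[symmetric] del: times_divide_eq_right)
  have horizontal: "a = 0 \<and> b = 0"
    if "z \<in> U" "(a *\<^sub>R du x z + b *\<^sub>R dv x z)$1 = 0" "(a *\<^sub>R du x z + b *\<^sub>R dv x z)$2 = 0" for z a b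
    using tangents_horizontally_independent[OF du[OF that(1)] dv[OF that(1)] _ that(2,3)] assms(6) that(1)
    by blast
  have fund: "\<forall>z\<in>U. iso_inner (du x z) (du x z) = (cmod (F z))\<^sup>2
      \<and> iso_inner (dv x z) (dv x z) = (cmod (F z))\<^sup>2 \<and> iso_inner (du x z) (dv x z) = 0"
    by (simp add: du dv iso_inner_def cmod_power2 flip: power2_eq_square)
  have "immersion U x"
    unfolding immersion_def
  proof
    fix z
    assume z: "z \<in> U"
    have "a = 0 \<and> b = 0" if "a *\<^sub>R du x z + b *\<^sub>R dv x z = 0" for a b
      by (rule horizontal[OF z]) (simp_all only: that zero_index)
    with x(1-3)[OF z] show "x differentiable (at z) \<and> du x differentiable (at z) \<and>
        dv x differentiable (at z) \<and> (\<forall>a b. a *\<^sub>R du x z + b *\<^sub>R dv x z = 0 \<longrightarrow> a = 0 \<and> b = 0)"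
      by blast
  qed
  moreover have "admissible U x"
    unfolding admissible_def
  proof
    fix z
    assume "z \<in> U"
    from horizontal[OF this] show "e3 \<notin> span {du x z, dv x z}"
      by (rule e3_notin_span_if_horizontally_independent)
  qed
  moreover have "iso_minimal U x"
    unfolding iso_minimal_def
  proof
    fix z
    assume "z \<in> U"
    with fund x(6) show "iso_mean_curvature x z = 0"
      by (intro iso_mean_curvature_eq_0_if_conformal_harmonic) simp_all
  qed
  moreover note fund
  moreover have "\<forall>z\<in>U. parabolic_normal x z =
        vector [Re (G z / of_real ((cmod (G z))\<^sup>2)), Im (G z / of_real ((cmod (G z))\<^sup>2)),
                1/2 - 1 / (2 * (cmod (G z))\<^sup>2)]
      \<and> parabolic_normal x z \<in> Sigma2 - {vector [0, 0, 1/2]}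
      \<and> par_stereo (parabolic_normal x z) = G z"
    using parabolic_normal_of_minimal_normal[OF minimal_normal_eq[OF du dv]] assms(6,7) by blast
  ultimately show ?thesis
    by (intro conjI)
qed

end
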